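(* Let ${\mathbf T}$ be a thinning matrix such that ${\mathbf T}_{n,n}>0$ and ${\mathbf T}_{n,n-1}>0$ for all $n\in\mathbb N$. Let $N$ be a random variable with law $\nu$ on $\mathbb N_0$ such that, if $\nu_{n_0}=0$ for some $n_0$, then $\nu_n=0$ for all $n\ge n_0$. Let ${\mathbf Q}$ be the corresponding condensation matrix. Then for all non-negative functions $g$ on $\mathbb N_0$, $$\mathbb E\Big[g(N)\,\frac{{\mathbf T}_{N,N-1}}{{\mathbf T}_{N-1,N-1}}\Big]=\mathbb E\Big[g(N+1)\,\frac{{\mathbf Q}_{N,N+1}}{{\mathbf Q}_{N,N}}\Big],$$ with the convention that $\frac{{\mathbf T}_{0,-1}}{{\mathbf T}_{-1,-1}}=0$.
   Context: A thinning matrix is a stochastic matrix ${\mathbf T}=({\mathbf T}_{n,k})_{n,k\in\mathbb N_0}$ with ${\mathbf T}_{n,k}=0$ for $k>n$. Let $\nu'=\nu{\mathbf T}$, i.e. $\nu'_k=\sum_n\nu_n{\mathbf T}_{n,k}$. The condensation matrix corresponding to $\nu$ and ${\mathbf T}$ is defined as follows. Let $N_\ast$ have conditional law ${\mathbf T}_{N,\cdot}$ given $N$. Let $\Upsilon$ be a stochastic matrix with $\mathbb E\,g(N_\ast,N-N_\ast)=\sum_{k,l}\nu'_k\Upsilon_{k,l}g(k,l)$ for all non-negative $g$. Then ${\mathbf Q}_{k,n}=\Upsilon_{k,n-k}$ for $k\le n$ and ${\mathbf Q}_{k,n}=0$ for $k>n$. Equivalently, ${\mathbf Q}$ is a stochastic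 matrix satisfying $\nu'_k{\mathbf Q}_{k,n}=\nu_n{\mathbf T}_{n,k}$ for all $k,n$. *)

theory Defs
  imports "HOL-Probability.Probability"
begin

definition stochastic_matrix :: "(nat \<Rightarrow> nat \<Rightarrow> real) \<Rightarrow> bool" where
  "stochastic_matrix M \<longleftrightarrow> (\<forall>n k. 0 \<le> M n k) \<and> (\<forall>n. (\<lambda>k. M n k) sums 1)"

definition thinning_matrix :: "(nat \<Rightarrow> nat \<Rightarrow> real) \<Rightarrow> bool" where
  "thinning_matrix T \<longleftrightarrow> stochastic_matrix T \<and> (\<forall>n k. n < k \<longrightarrow> T n k = 0)"

definition thinned_law :: "nat pmf \<Rightarrow> (nat \<Rightarrow> nat \<Rightarrow> real) \<Rightarrow> nat \<Rightarrow> real" where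
  "thinned_law \<nu> T k = (\<Sum>n. pmf \<nu> n * T n k)"

definition condensation_matrix ::
  "nat pmf \<Rightarrow> (nat \<Rightarrow> nat \<Rightarrow> real) \<Rightarrow> (nat \<Rightarrow> nat \<Rightarrow> real) \<Rightarrow> bool" where
  "condensation_matrix \<nu> T Q \<longleftrightarrow> stochastic_matrix Q \<and> (\<forall>k n. n < k \<longrightarrow> Q k n = 0) \<and>
     (\<forall>k n. thinned_law \<nu> T k * Q k n = pmf \<nu> n * T n k)"

end

theory Submission
  imports Defs
begin

text \<open>Since \<open>\<nu>'\<^sub>k Q\<^sub>k\<^sub>,\<^sub>n = \<nu>\<^sub>n T\<^sub>n\<^sub>,\<^sub>k\<close>, the ratio \<open>Q\<^sub>m\<^sub>,\<^sub>m\<^sub>+\<^sub>1 / Q\<^sub>m\<^sub>,\<^sub>m\<close> equals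
  \<open>\<nu>\<^sub>m\<^sub>+\<^sub>1 T\<^sub>m\<^sub>+\<^sub>1\<^sub>,\<^sub>m / (\<nu>\<^sub>m T\<^sub>m\<^sub>,\<^sub>m)\<close> wherever \<open>\<nu>\<^sub>m > 0\<close>. Hence the \<open>m\<close>-th term of the
  right-hand expectation is the \<open>(m+1)\<close>-th term of the left-hand one; where \<open>\<nu>\<^sub>m = 0\<close>
  both terms vanish because the support of \<open>\<nu>\<close> is an initial segment.\<close>

lemma stochastic_matrix_le_1:
  assumes "stochastic_matrix M"
  shows "M n k \<le> 1"
proof -
  have nonneg: "\<And>k. 0 \<le> M n k" and sums: "(\<lambda>k. M n k) sums 1"
    using assms unfolding stochastic_matrix_def by auto
  have "sum (M n) {k} \<le> suminf (M n)"
    using sums nonneg by (intro sum_le_suminf) (auto simp: sums_iff)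
  then show ?thesis
    using sums by (simp add: sums_iff)
qed

lemma thinning_matrix_0_0:
  assumes "thinning_matrix T"
  shows "T 0 0 = 1"
proof -
  have "T 0 = (\<lambda>k. if k = 0 then T 0 k else 0)"
    using assms unfolding thinning_matrix_def by auto
  then have "T 0 sums T 0 0"
    by (metis sums_single)
  moreover have "T 0 sums 1"
    using assms unfolding thinning_matrix_def stochastic_matrix_def by auto
  ultimately show ?thesis
    using sums_unique2 by blast
qed

lemma summable_thinned_law:
  assumes "stochastic_matrix T"
  shows "summable (\<lambda>n. pmf \<nu> n * T n k)"
proof (rule summable_comparison_test)
  show "summable (pmf \<nu>)"
    using pmf_abs_summable[of \<nu> UNIV] abs_summable_on_nat_iff'[of "pmf \<nu>"] by simp
  show "\<exists>N. \<forall>n\<ge>N. norm (pmf \<nu> n * T n k) \<le> pmf \<nu> n"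
    using assms stochastic_matrix_le_1[OF assms]
    by (auto simp: stochastic_matrix_def intro!: mult_left_le)
qed

lemma pmf_mult_le_thinned_law:
  assumes "stochastic_matrix T"
  shows "pmf \<nu> n * T n k \<le> thinned_law \<nu> T k"
proof -
  have "sum (\<lambda>n. pmf \<nu> n * T n k) {n} \<le> thinned_law \<nu> T k"
    unfolding thinned_law_def using assms
    by (intro sum_le_suminf summable_thinned_law) (auto simp: stochastic_matrix_def)
  then show ?thesis
    by simp
qed

lemma condensation_matrix_eq:
  assumes "condensation_matrix \<nu> T Q" and "0 < thinned_law \<nu> T k"
  shows "Q k n = pmf \<nu> n * T n k / thinned_law \<nu> T k"
  using assms by (simp add: condensation_matrix_def field_simps)

lemma condensation_matrix_ratio:
  assumes "stochastic_matrix T" and "condensation_matrix \<nu> T Q"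
    and "0 < pmf \<nu> m" and "0 < T m m"
  shows "Q m n / Q m m = pmf \<nu> n * T n m / (pmf \<nu> m * T m m)"
proof -
  have "0 < pmf \<nu> m * T m m"
    using assms(3,4) by simp
  also have "\<dots> \<le> thinned_law \<nu> T m"
    using assms(1) by (rule pmf_mult_le_thinned_law)
  finally have "0 < thinned_law \<nu> T m" .
  then show ?thesis
    using assms(2) by (simp add: condensation_matrix_eq)
qed

lemma thinning_ratio_eq_condensation_ratio:
  assumes "stochastic_matrix T" and "condensation_matrix \<nu> T Q" and "0 < T m m"
    and "pmf \<nu> m = 0 \<Longrightarrow> pmf \<nu> (Suc m) = 0"
  shows "pmf \<nu> (Suc m) * (T (Suc m) m / T m m) = pmf \<nu> m * (Q m (Suc m) / Q m m)"
proof (cases "pmf \<nu> m = 0")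
  case False
  then have pos: "0 < pmf \<nu> m"
    using pmf_nonneg[of \<nu> m] by linarith
  then have "Q m (Suc m) / Q m m = pmf \<nu> (Suc m) * T (Suc m) m / (pmf \<nu> m * T m m)"
    using condensation_matrix_ratio[OF assms(1,2)] assms(3) by blast
  with pos assms(3) show ?thesis
    by (simp add: field_simps)
qed (use assms(4) in simp)

lemma nn_integral_measure_pmf_nat_shift:
  fixes f :: "nat \<Rightarrow> ennreal"
  assumes "f 0 = 0"
  shows "(\<integral>\<^sup>+ n. f n \<partial>measure_pmf \<nu>) = (\<Sum>n. ennreal (pmf \<nu> (Suc n)) * f (Suc n))"
proof -
  let ?a = "\<lambda>n. ennreal (pmf \<nu> n) * f n"
  have "(\<lambda>n. ?a (Suc n)) sums (\<Sum>n. ?a (Suc n))"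
    by (intro summable_sums summableI)
  then have "?a sums (\<Sum>n. ?a (Suc n))"
    using sums_Suc[of ?a] assms by simp
  then show ?thesis
    by (simp add: nn_integral_measure_pmf nn_integral_count_space_nat sums_iff)
qed

theorem mainTheorem2:
  fixes T Q :: "nat \<Rightarrow> nat \<Rightarrow> real" and \<nu> :: "nat pmf" and g :: "nat \<Rightarrow> real"
  assumes "thinning_matrix T"
    and "\<forall>n\<ge>1. 0 < T n n \<and> 0 < T n (n - 1)"
    and "\<forall>n0. pmf \<nu> n0 = 0 \<longrightarrow> (\<forall>n\<ge>n0. pmf \<nu> n = 0)"
    and "condensation_matrix \<nu> T Q"
    and "\<forall>n. 0 \<le> g n"
  shows "(\<integral>\<^sup>+ n. ennreal (g n * (if n = 0 then 0 else T n (n - 1) / T (n - 1) (n - 1))) \<partial>measure_pmf \<nu>)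
       = (\<integral>\<^sup>+ n. ennreal (g (n + 1) * (Q n (n + 1) / Q n n)) \<partial>measure_pmf \<nu>)"
proof -
  have T: "stochastic_matrix T"
    using assms(1) by (simp add: thinning_matrix_def)
  have diag_pos: "0 < T m m" for m
    using assms(2) thinning_matrix_0_0[OF assms(1)] by (cases m) auto
  have support: "pmf \<nu> m = 0 \<Longrightarrow> pmf \<nu> (Suc m) = 0" for m
    using assms(3) by auto
  have step: "pmf \<nu> (Suc m) * (g (Suc m) * (T (Suc m) m / T m m))
      = pmf \<nu> m * (g (Suc m) * (Q m (Suc m) / Q m m))" for m
  proof -
    have "pmf \<nu> (Suc m) * (T (Suc m) m / T m m) = pmf \<nu> m * (Q m (Suc m) / Q m m)"
      using T assms(4) diag_pos support by (rule thinning_ratio_eq_condensation_ratio)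
    then show ?thesis
      by (simp only: mult.left_commute[of _ "g (Suc m)"])
  qed
  have nonneg: "0 \<le> T n k" "0 \<le> Q n k" for n k
    using T assms(4) by (auto simp: stochastic_matrix_def condensation_matrix_def)
  have "(\<integral>\<^sup>+ n. ennreal (g n * (if n = 0 then 0 else T n (n - 1) / T (n - 1) (n - 1))) \<partial>measure_pmf \<nu>)
      = (\<Sum>m. ennreal (pmf \<nu> (Suc m)) * ennreal (g (Suc m) * (T (Suc m) m / T m m)))"
    by (subst nn_integral_measure_pmf_nat_shift) simp_all
  also have "\<dots> = (\<Sum>m. ennreal (pmf \<nu> m) * ennreal (g (m + 1) * (Q m (m + 1) / Q m m)))"
    using step assms(5) nonneg by (simp add: ennreal_mult'[symmetric] ennreal_mult[symmetric])
  also have "\<dots> = (\<integral>\<^sup>+ n. ennreal (g (n + 1) * (Q n (n + 1) / Q n n)) \<partial>measure_pmf \<nu>)"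
    by (simp add: nn_integral_measure_pmf nn_integral_count_space_nat)
  finally show ?thesis .
qed

end
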